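(* Let $(M^4,\omega)$ be a symplectic 4-manifold, let $\Sigma\subset M$ be a symplectic surface, and let $D\subset M$ be an embedded Lagrangian disk with $\partial D\subset\Sigma$. Then the framing of the normal bundle $\nu(D)|_{\partial D}$ induced by $\Sigma$ (namely, by the direction in $T\Sigma$ normal to $\partial D$) is $+1$, relative to the $0$-framing of $D$.
   Context: A neighborhood of the Lagrangian disk $D$ can be symplectically identified with a neighborhood of the unit disk in the zero section $\mathbb{R}^2$ of $T^*\mathbb{R}^2$ (coordinates $(q_1,p_1,q_2,p_2)$, symplectic form $dq_1\wedge dp_1+dq_2\wedge dp_2$), with $D$ corresponding to $\{q_1^2+q_2^2\le 1,\ p_1=p_2=0\}$. The standard coordinates on $\mathbb{R}^2$ induce a trivialization of the cotangent fibers normal to the disk; restricted to $\partial D$ this gives a framing of $\nu(D)|_{\partial D}$ which extends over $D$, and this framing is declared to be the $0$-framing. Framings of $\nu(D)|_{\partial D}$ are measured as integers relative to it. *)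

theory Defs
  imports "HOL-Complex_Analysis.Complex_Analysis"
begin

text \<open>Local model (T*R^2 near the unit disk in the zero section).  Points of R^4 are
  tuples (q1, p1, q2, p2).  The Lagrangian disk D is the unit disk in the (q1,q2)-plane
  with p1 = p2 = 0; its normal fibre at each point is the (p1,p2)-plane, and the
  0-framing of nu(D) over the boundary is the constant framing given by the p-coordinates.\<close>

type_synonym pt4 = "real \<times> real \<times> real \<times> real"

definition omega_std :: "pt4 \<Rightarrow> pt4 \<Rightarrow> real" where
  "omega_std u v = (case u of (a1, b1, a2, b2) \<Rightarrow> case v of (c1, d1, c2, d2) \<Rightarrow>
      a1 * d1 - b1 * c1 + a2 * d2 - b2 * c2)"

definition lag_disk :: "pt4 set" where
  "lag_disk = {(q1, p1, q2, p2). q1\<^sup>2 + q2\<^sup>2 \<le> 1 \<and> p1 = 0 \<and> p2 = 0}"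

text \<open>Boundary circle of D, oriented as the boundary of D (counterclockwise in (q1,q2)).\<close>
definition bdry_circle :: "real \<Rightarrow> pt4" where
  "bdry_circle \<theta> = (cos \<theta>, 0, sin \<theta>, 0)"

text \<open>A collar of the symplectic surface Sigma around the circle boundary(D) inside Sigma:
  a C^1 embedding F of the annulus (R / 2 pi Z) x (-eps, eps) into R^4 with F(theta,0)
  on the boundary circle, derivative F' (continuous), whose tangent planes are
  omega-symplectic.  Sigma near boundary(D) is the image of F.\<close>
definition symplectic_collar ::
  "(real \<times> real \<Rightarrow> pt4) \<Rightarrow> (real \<times> real \<Rightarrow> real \<times> real \<Rightarrow> pt4) \<Rightarrow> real \<Rightarrow> bool" where
  "symplectic_collar F F' \<epsilon> \<longleftrightarrow>
     \<epsilon> > 0 \<and>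
     (\<forall>\<theta> t. \<bar>t\<bar> < \<epsilon> \<longrightarrow> (F has_derivative F' (\<theta>, t)) (at (\<theta>, t))) \<and>
     (\<forall>v. continuous_on (UNIV \<times> {-\<epsilon><..<\<epsilon>}) (\<lambda>x. F' x v)) \<and>
     (\<forall>\<theta> t. F (\<theta> + 2 * pi, t) = F (\<theta>, t)) \<and>
     inj_on F ({0..<2 * pi} \<times> {-\<epsilon><..<\<epsilon>}) \<and>
     (\<forall>\<theta>. F (\<theta>, 0) = bdry_circle \<theta>) \<and>
     (\<forall>\<theta> t. \<bar>t\<bar> < \<epsilon> \<longrightarrow> omega_std (F' (\<theta>, t) (1, 0)) (F' (\<theta>, t) (0, 1)) \<noteq> 0)"

text \<open>Framing of nu(D) over boundary(D) induced by Sigma, measured relative to the 0-framing: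
  the vector in T Sigma transverse to boundary(D) (namely dF/dt at t = 0), projected to the
  normal fibre (p1,p2) of D, viewed in the constant trivialization, gives a loop in
  R^2 - 0 = C - 0 as theta runs once around boundary(D); the framing integer is its
  winding number about 0.\<close>
definition normal_proj :: "pt4 \<Rightarrow> complex" where
  "normal_proj w = Complex (fst (snd w)) (snd (snd (snd w)))"

definition sigma_framing :: "(real \<times> real \<Rightarrow> real \<times> real \<Rightarrow> pt4) \<Rightarrow> complex" where
  "sigma_framing F' = winding_number (\<lambda>s. normal_proj (F' (2 * pi * s, 0) (0, 1))) 0"

end

theory Submission
  imports Defs
begin

(* Along the boundary circle the tangent vector is (-sin t, 0, cos t, 0), and pairing it with a
   vector w under omega gives Im (nu(w) * cnj (cis t)), where nu(w) is the normal (p1, p2)-component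
   of w read as a complex number.  Since the tangent planes of Sigma are symplectic, the transverse
   vector of Sigma therefore projects to a loop in C - 0 that is never a real multiple of cis t.
   Such a loop stays in one of the two half-planes rotating with cis t, so it is homotopic in
   C - 0 to +-i cis t and winds once. *)

lemma connected_nonvanishing_sign_constant:
  fixes f :: "'a::topological_space \<Rightarrow> real"
  assumes "connected S" "continuous_on S f" "\<And>x. x \<in> S \<Longrightarrow> f x \<noteq> 0"
  shows "(\<forall>x\<in>S. f x > 0) \<or> (\<forall>x\<in>S. f x < 0)"
proof (rule ccontr)
  assume "\<not> ?thesis"
  then obtain a b where "a \<in> S" "b \<in> S" "f a \<le> 0" "0 \<le> f b"
    by (meson not_less)
  moreover have "connected (f ` S)"
    using assms by (simp add: connected_continuous_image)
  ultimately have "0 \<in> f ` S"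
    by (metis connected_iff_interval imageI)
  then show False
    using assms(3) by (metis imageE)
qed

lemma zero_notin_closed_segment_if_Re_mult_cnj_nonneg:
  fixes a b :: complex
  assumes "a \<noteq> 0" "b \<noteq> 0" "Re (a * cnj b) \<ge> 0"
  shows "0 \<notin> closed_segment a b"
proof
  assume "0 \<in> closed_segment a b"
  then obtain u where u: "0 \<le> u" "u \<le> 1" "(1 - u) *\<^sub>R a + u *\<^sub>R b = 0"
    by (auto simp: closed_segment_def)
  have "(cmod b)\<^sup>2 = Re b * Re b + Im b * Im b"
    by (metis cmod_power2 power2_eq_square)
  then have "(1 - u) * Re (a * cnj b) + u * (cmod b)\<^sup>2 = Re (((1 - u) *\<^sub>R a + u *\<^sub>R b) * cnj b)"
    by (simp add: scaleR_conv_of_real algebra_simps)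
  then have "(1 - u) * Re (a * cnj b) + u * (cmod b)\<^sup>2 = 0"
    using u(3) by simp
  moreover have "(1 - u) * Re (a * cnj b) \<ge> 0"
    using u assms by simp
  moreover have "u * (cmod b)\<^sup>2 \<ge> 0"
    using u by simp
  ultimately have "u * (cmod b)\<^sup>2 = 0"
    by linarith
  then have "u = 0"
    using assms by simp
  then show False
    using u assms by simp
qed

lemma winding_number_loops_eq_if_Re_mult_cnj_nonneg:
  assumes "path g" "path h" "pathfinish g = pathstart g" "pathfinish h = pathstart h"
    and "\<And>t. t \<in> {0..1} \<Longrightarrow> g t \<noteq> 0 \<and> h t \<noteq> 0 \<and> Re (g t * cnj (h t)) \<ge> 0"
  shows "winding_number g 0 = winding_number h 0"
proof (rule winding_number_loops_linear_eq[OF assms(2,1,4,3)])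
  fix t :: real
  assume "t \<in> {0..1}"
  then have "0 \<notin> closed_segment (g t) (h t)"
    using assms(5) by (simp add: zero_notin_closed_segment_if_Re_mult_cnj_nonneg)
  then show "0 \<notin> closed_segment (h t) (g t)"
    by (simp add: closed_segment_commute)
qed

text \<open>Two loops that are nowhere real multiples of each other wind equally around \<open>0\<close>:
  depending on the sign of \<open>Im (g \<cdot> conj h)\<close>, the loop \<open>g\<close> stays within a right angle of
  \<open>i h\<close> or of \<open>-i h\<close>, and both of these stay at a right angle to \<open>h\<close>.\<close>

lemma winding_number_loops_eq_if_Im_mult_cnj_nonzero:
  assumes g: "path g" "pathfinish g = pathstart g"
    and h: "path h" "pathfinish h = pathstart h"
    and Im_ne: "\<And>t. t \<in> {0..1} \<Longrightarrow> Im (g t * cnj (h t)) \<noteq> 0"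
  shows "winding_number g 0 = winding_number h 0"
proof -
  have nonzero: "g t \<noteq> 0" "h t \<noteq> 0" if "t \<in> {0..1}" for t
    using Im_ne[OF that] by auto
  have "continuous_on {0..1} (\<lambda>t. Im (g t * cnj (h t)))"
    using g h unfolding path_def by (intro continuous_intros)
  then have "(\<forall>t\<in>{0..1}. Im (g t * cnj (h t)) > 0) \<or> (\<forall>t\<in>{0..1}. Im (g t * cnj (h t)) < 0)"
    using connected_nonvanishing_sign_constant[OF connected_Icc] Im_ne by blast
  then obtain \<sigma> :: real where \<sigma>: "\<sigma> \<noteq> 0" "\<And>t. t \<in> {0..1} \<Longrightarrow> \<sigma> * Im (g t * cnj (h t)) > 0"
  proof (elim disjE)
    assume "\<forall>t\<in>{0..1}. Im (g t * cnj (h t)) > 0"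
    then show thesis
      using that[of 1] by simp
  next
    assume "\<forall>t\<in>{0..1}. Im (g t * cnj (h t)) < 0"
    then show thesis
      using that[of "-1"] by simp
  qed
  define k where "k t = \<i> * of_real \<sigma> * h t" for t
  have k: "path k" "pathfinish k = pathstart k"
    using h by (auto simp: k_def path_def pathstart_def pathfinish_def intro!: continuous_intros)
  have Re_gk: "Re (g t * cnj (k t)) = \<sigma> * Im (g t * cnj (h t))"
    and Re_kh: "Re (k t * cnj (h t)) = 0" for t
    by (simp_all add: k_def algebra_simps)
  have k_nonzero: "k t \<noteq> 0" if "t \<in> {0..1}" for t
    using \<sigma>(1) nonzero[OF that] by (auto simp: k_def)
  have "winding_number g 0 = winding_number k 0"
    using g k nonzero k_nonzero Re_gk \<sigma>(2)
    by (intro winding_number_loops_eq_if_Re_mult_cnj_nonneg) (auto intro: less_imp_le)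
  also have "\<dots> = winding_number h 0"
    using h k nonzero k_nonzero Re_kh
    by (intro winding_number_loops_eq_if_Re_mult_cnj_nonneg) auto
  finally show ?thesis .
qed

lemma omega_std_circle_tangent:
  "omega_std (- sin \<theta>, 0, cos \<theta>, 0) w = Im (normal_proj w * cnj (cis \<theta>))"
  by (cases w) (simp add: omega_std_def normal_proj_def algebra_simps)

lemma continuous_on_normal_proj: "continuous_on S normal_proj"
proof -
  have eq: "normal_proj = (\<lambda>w. of_real (fst (snd w)) + \<i> * of_real (snd (snd (snd w))))"
    by (auto simp: normal_proj_def fun_eq_iff complex_eq_iff)
  show ?thesis
    by (subst eq) (intro continuous_intros)
qed

lemma has_derivative_periodic:
  assumes "\<And>x. f (x + p) = f x"
    and "(f has_derivative D) (at (x + p))" "(f has_derivative D') (at x)"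
  shows "D = D'"
proof -
  have "((\<lambda>y. y + p) has_derivative (\<lambda>y. y)) (at x)"
    by (auto intro!: derivative_eq_intros)
  from has_derivative_compose[OF this assms(2)]
  have "((\<lambda>y. f (y + p)) has_derivative D) (at x)"
    by simp
  moreover have "(\<lambda>y. f (y + p)) = f"
    using assms(1) by (rule ext)
  ultimately have "(f has_derivative D) (at x)"
    by simp
  then show ?thesis
    using assms(3) by (rule has_derivative_unique)
qed

lemma symplectic_collar_has_derivative_on_circle:
  assumes "symplectic_collar F F' \<epsilon>"
  shows "(F has_derivative F' (\<theta>, 0)) (at (\<theta>, 0))"
proof -
  have "\<epsilon> > 0" "\<forall>\<theta> t. \<bar>t\<bar> < \<epsilon> \<longrightarrow> (F has_derivative F' (\<theta>, t)) (at (\<theta>, t))"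
    using assms unfolding symplectic_collar_def by blast+
  then show ?thesis
    by (metis abs_zero)
qed

lemma symplectic_collar_circle_tangent:
  assumes "symplectic_collar F F' \<epsilon>"
  shows "F' (\<theta>, 0) (1, 0) = (- sin \<theta>, 0, cos \<theta>, 0)"
proof -
  have "((\<lambda>s. (s, 0::real)) has_derivative (\<lambda>s. (s, 0))) (at \<theta>)"
    by (auto intro!: derivative_eq_intros)
  then have "((\<lambda>s. F (s, 0)) has_derivative (\<lambda>s. F' (\<theta>, 0) (s, 0))) (at \<theta>)"
    using symplectic_collar_has_derivative_on_circle[OF assms] by (rule has_derivative_compose)
  moreover have "\<forall>\<theta>. F (\<theta>, 0) = bdry_circle \<theta>"
    using assms unfolding symplectic_collar_def by blast
  then have "(\<lambda>s. F (s, 0)) = (\<lambda>s. (cos s, 0, sin s, 0))"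
    by (simp add: bdry_circle_def)
  ultimately have "((\<lambda>s. (cos s, 0, sin s, 0)) has_derivative (\<lambda>s. F' (\<theta>, 0) (s, 0))) (at \<theta>)"
    by simp
  moreover have "((\<lambda>s. (cos s, 0::real, sin s, 0::real)) has_derivative
      (\<lambda>s. (s * - sin \<theta>, 0 * s, s * cos \<theta>, 0 * s))) (at \<theta>)"
    by (auto intro!: derivative_eq_intros)
  ultimately have "(\<lambda>s. F' (\<theta>, 0) (s, 0)) = (\<lambda>s. (s * - sin \<theta>, 0 * s, s * cos \<theta>, 0 * s))"
    by (rule has_derivative_unique)
  from fun_cong[OF this, of 1] show ?thesis
    by simp
qed

lemma symplectic_collar_derivative_periodic:
  assumes "symplectic_collar F F' \<epsilon>"
  shows "F' (\<theta> + 2 * pi, 0) = F' (\<theta>, 0)"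
proof (rule has_derivative_periodic)
  have "\<forall>\<theta> t. F (\<theta> + 2 * pi, t) = F (\<theta>, t)"
    using assms unfolding symplectic_collar_def by blast
  then show "F (x + (2 * pi, 0)) = F x" for x
    by (cases x) simp
  show "(F has_derivative F' (\<theta> + 2 * pi, 0)) (at ((\<theta>, 0) + (2 * pi, 0)))"
       "(F has_derivative F' (\<theta>, 0)) (at (\<theta>, 0))"
    using symplectic_collar_has_derivative_on_circle[OF assms] by simp_all
qed

theorem proposition2p1:
  fixes F :: "real \<times> real \<Rightarrow> pt4" and F' :: "real \<times> real \<Rightarrow> real \<times> real \<Rightarrow> pt4"
    and \<epsilon> :: real
  assumes "symplectic_collar F F' \<epsilon>"
  shows "sigma_framing F' = 1"
proof -
  define g where "g s = normal_proj (F' (2 * pi * s, 0) (0, 1))" for s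
  have "\<epsilon> > 0" and cont_F': "continuous_on (UNIV \<times> {-\<epsilon><..<\<epsilon>}) (\<lambda>x. F' x (0, 1))"
    using assms unfolding symplectic_collar_def by blast+
  have "continuous_on {0..1} (\<lambda>s::real. (2 * pi * s, 0::real))"
    by (intro continuous_intros)
  then have "continuous_on {0..1} (\<lambda>s. F' (2 * pi * s, 0) (0, 1))"
    by (rule continuous_on_compose2[OF cont_F']) (use \<open>\<epsilon> > 0\<close> in auto)
  then have "path g"
    unfolding path_def g_def by (rule continuous_on_compose2[OF continuous_on_normal_proj]) auto
  moreover have "pathfinish g = pathstart g"
    using symplectic_collar_derivative_periodic[OF assms, of 0]
    by (simp add: g_def pathstart_def pathfinish_def)
  moreover have "Im (g s * cnj (circlepath 0 1 s)) \<noteq> 0" for s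
  proof -
    have "circlepath 0 1 s = cis (2 * pi * s)"
      by (simp add: circlepath cis_conv_exp mult_ac)
    moreover have "omega_std (F' (2 * pi * s, 0) (1, 0)) (F' (2 * pi * s, 0) (0, 1)) \<noteq> 0"
      using assms unfolding symplectic_collar_def by auto
    ultimately show ?thesis
      by (simp add: g_def symplectic_collar_circle_tangent[OF assms] omega_std_circle_tangent)
  qed
  ultimately have "winding_number g 0 = winding_number (circlepath 0 1) 0"
    by (intro winding_number_loops_eq_if_Im_mult_cnj_nonzero) auto
  then show ?thesis
    unfolding sigma_framing_def g_def by (simp add: winding_number_circlepath_centre)
qed

end
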